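(* Let $\Omega\subset\mathbb{R}^n$ be a convex body. For any $\varepsilon\in[0,\mathrm{In}(\Omega)]$, $$\mathrm{vol}(L_\varepsilon(\Omega))\le g(\varepsilon):=\mathrm{vol}(\Omega)\left(1-\Big(1-\frac{\varepsilon}{\mathrm{In}(\Omega)}\Big)^{n}\right).$$
   Context: A convex body is a convex, closed subset of $\mathbb{R}^n$ with non-empty interior. $\mathrm{vol}$ is $n$-dimensional Lebesgue measure. $\mathrm{In}(\Omega)$ is the inradius of $\Omega$: the radius of the largest ball contained in $\Omega$. The $\varepsilon$-inner neighbourhood is $L_\varepsilon(\Omega)=\{x\in\Omega:\|x-y\|\le\varepsilon\text{ for some }y\in\partial\Omega\}$. *)

theory Defs
  imports "HOL-Analysis.Analysis"
begin

definition convex_body :: "'a::euclidean_space set \<Rightarrow> bool" where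
  "convex_body \<Omega> \<longleftrightarrow> convex \<Omega> \<and> closed \<Omega> \<and> bounded \<Omega> \<and> interior \<Omega> \<noteq> {}"

definition inradius :: "'a::euclidean_space set \<Rightarrow> real" where
  "inradius \<Omega> = Sup {r. \<exists>x. cball x r \<subseteq> \<Omega>}"

definition inner_nbhd :: "real \<Rightarrow> 'a::euclidean_space set \<Rightarrow> 'a set" where
  "inner_nbhd \<epsilon> \<Omega> = {x \<in> \<Omega>. \<exists>y \<in> frontier \<Omega>. dist x y \<le> \<epsilon>}"

end

theory Submission
  imports Defs
begin

text \<open>If \<open>cball x\<^sub>0 \<rho> \<subseteq> \<Omega>\<close>, convexity shows that every point of the homothetic copy
  \<open>(1 - t) x\<^sub>0 + t \<cdot> interior \<Omega>\<close> with \<open>t = 1 - \<epsilon>/\<rho>\<close> is the centre of a ball of radius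
  larger than \<open>\<epsilon>\<close> inside \<open>\<Omega>\<close>. Hence \<open>L\<^sub>\<epsilon>(\<Omega>)\<close> misses this copy, whose volume is
  \<open>t\<^sup>n vol(\<Omega>)\<close>. Letting \<open>\<rho>\<close> increase to the inradius gives the bound.\<close>

lemma measure_le_fmeasurable_superset:
  assumes "S \<subseteq> T" and "T \<in> fmeasurable M"
  shows "measure M S \<le> measure M T"
proof (cases "S \<in> sets M")
  case True
  then show ?thesis by (rule measure_mono_fmeasurable[OF assms(1) _ assms(2)])
next
  case False
  then show ?thesis by (simp add: measure_notin_sets)
qed

lemma convex_cball_combination_subset:
  fixes S :: "'a::real_normed_vector set"
  assumes S: "convex S" and x: "cball x r \<subseteq> S" and y: "cball y d \<subseteq> S"
    and "0 \<le> r" "0 \<le> d" "0 \<le> t" "t \<le> 1"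
  shows "cball ((1 - t) *\<^sub>R x + t *\<^sub>R y) ((1 - t) * r + t * d) \<subseteq> S"
proof
  define c where "c = (1 - t) *\<^sub>R x + t *\<^sub>R y"
  define e where "e = (1 - t) * r + t * d"
  fix w assume "w \<in> cball c e"
  then have v: "norm (w - c) \<le> e" by (simp add: dist_norm norm_minus_commute)
  have "x \<in> S" "y \<in> S" using x y \<open>0 \<le> r\<close> \<open>0 \<le> d\<close> by auto
  show "w \<in> S"
  proof (cases "e = 0")
    case True
    then have "w = c" using v by simp
    then show ?thesis unfolding c_def using S \<open>x \<in> S\<close> \<open>y \<in> S\<close> assms(6,7) by (simp add: convexD)
  next
    case False
    then have "0 < e" using assms(4-7) unfolding e_def by (smt (verit) mult_nonneg_nonneg)
    have shrink: "norm ((s / e) *\<^sub>R (w - c)) \<le> s" if "0 \<le> s" for s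
    proof -
      have "norm ((s / e) *\<^sub>R (w - c)) = s / e * norm (w - c)" using that \<open>0 < e\<close> by simp
      also have "\<dots> \<le> s / e * e" using v that \<open>0 < e\<close> by (intro mult_left_mono) auto
      finally show ?thesis using \<open>0 < e\<close> by simp
    qed
    have xr: "x + (r / e) *\<^sub>R (w - c) \<in> S" and yd: "y + (d / e) *\<^sub>R (w - c) \<in> S"
      using x y shrink[OF \<open>0 \<le> r\<close>] shrink[OF \<open>0 \<le> d\<close>] by (auto simp: dist_norm)
    have "(1 - t) *\<^sub>R (r / e) *\<^sub>R (w - c) + t *\<^sub>R (d / e) *\<^sub>R (w - c)
        = (((1 - t) * r + t * d) / e) *\<^sub>R (w - c)"
      by (simp add: scaleR_add_left[symmetric] add_divide_distrib)
    also have "\<dots> = w - c" using \<open>0 < e\<close> unfolding e_def by simp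
    finally have "w = (1 - t) *\<^sub>R (x + (r / e) *\<^sub>R (w - c)) + t *\<^sub>R (y + (d / e) *\<^sub>R (w - c))"
      using \<open>0 < e\<close> unfolding c_def by (simp add: algebra_simps)
    moreover have "(1 - t) *\<^sub>R (x + (r / e) *\<^sub>R (w - c)) + t *\<^sub>R (y + (d / e) *\<^sub>R (w - c)) \<in> S"
      using S xr yd assms(6,7) by (intro convexD) auto
    ultimately show ?thesis by simp
  qed
qed

lemma inner_nbhd_subset: "inner_nbhd \<epsilon> \<Omega> \<subseteq> \<Omega>"
  by (auto simp: inner_nbhd_def)

lemma notin_inner_nbhd_if_ball_subset:
  assumes "ball z e \<subseteq> \<Omega>" and "\<epsilon> < e"
  shows "z \<notin> inner_nbhd \<epsilon> \<Omega>"
proof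
  assume "z \<in> inner_nbhd \<epsilon> \<Omega>"
  then obtain f where f: "f \<in> frontier \<Omega>" "dist z f \<le> \<epsilon>"
    unfolding inner_nbhd_def by auto
  then have "f \<in> interior \<Omega>"
    using assms by (meson interior_maximal open_ball subsetD mem_ball order_le_less_trans)
  then show False using f by (simp add: frontier_def)
qed

lemma inner_nbhd_disjoint_homothetic_interior:
  fixes \<Omega> :: "'a::euclidean_space set"
  assumes "convex \<Omega>" and "cball x\<^sub>0 \<rho> \<subseteq> \<Omega>" and "0 \<le> \<rho>" and "0 < t" "t \<le> 1"
  shows "inner_nbhd ((1 - t) * \<rho>) \<Omega> \<inter> (\<lambda>y. (1 - t) *\<^sub>R x\<^sub>0 + t *\<^sub>R y) ` interior \<Omega> = {}"
proof -
  have "(1 - t) *\<^sub>R x\<^sub>0 + t *\<^sub>R y \<notin> inner_nbhd ((1 - t) * \<rho>) \<Omega>" if "y \<in> interior \<Omega>" for y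
  proof -
    obtain \<delta> where "0 < \<delta>" and "cball y \<delta> \<subseteq> \<Omega>"
      using \<open>y \<in> interior \<Omega>\<close> by (meson mem_interior_cball)
    then have "cball ((1 - t) *\<^sub>R x\<^sub>0 + t *\<^sub>R y) ((1 - t) * \<rho> + t * \<delta>) \<subseteq> \<Omega>"
      using assms by (intro convex_cball_combination_subset) auto
    then show ?thesis
      using \<open>0 < \<delta>\<close> \<open>0 < t\<close> ball_subset_cball
      by (intro notin_inner_nbhd_if_ball_subset[where e = "(1 - t) * \<rho> + t * \<delta>"]) auto
  qed
  then show ?thesis by auto
qed

lemma measure_inner_nbhd_le_of_cball_subset:
  fixes \<Omega> :: "'a::euclidean_space set"
  assumes "convex \<Omega>" and "bounded \<Omega>" and "cball x\<^sub>0 \<rho> \<subseteq> \<Omega>" and "0 \<le> \<epsilon>" "\<epsilon> < \<rho>"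
  shows "measure lebesgue (inner_nbhd \<epsilon> \<Omega>) \<le> measure lebesgue \<Omega> * (1 - (1 - \<epsilon> / \<rho>) ^ DIM('a))"
proof -
  have \<Omega>: "\<Omega> \<in> lmeasurable" using assms(1,2) by (rule measurable_convex)
  define t where "t = 1 - \<epsilon> / \<rho>"
  have "0 < t" "t \<le> 1" and \<epsilon>: "\<epsilon> = (1 - t) * \<rho>"
    unfolding t_def using assms(4,5) by (auto simp: field_simps)
  define A where "A = (\<lambda>y. (1 - t) *\<^sub>R x\<^sub>0 + t *\<^sub>R y) ` interior \<Omega>"
  have "x\<^sub>0 \<in> \<Omega>" using assms(3-5) by auto
  then have "A \<subseteq> \<Omega>"
    unfolding A_def using \<open>convex \<Omega>\<close> \<open>0 < t\<close> \<open>t \<le> 1\<close> interior_subset by (auto intro!: convexD)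
  have "open A" unfolding A_def using \<open>0 < t\<close> by (intro open_affinity) auto
  then have A: "A \<in> lmeasurable"
    using bounded_subset[OF \<open>bounded \<Omega>\<close> \<open>A \<subseteq> \<Omega>\<close>] by (simp add: lmeasurable_open)
  have "measure lebesgue A = \<bar>t\<bar> ^ DIM('a) * measure lebesgue (interior \<Omega>)"
    unfolding A_def using measure_lebesgue_affine[of t "(1 - t) *\<^sub>R x\<^sub>0" "interior \<Omega>"]
    by (simp add: add.commute)
  also have "\<dots> = t ^ DIM('a) * measure lebesgue \<Omega>"
    using measure_interior[OF \<open>bounded \<Omega>\<close> negligible_convex_frontier[OF \<open>convex \<Omega>\<close>]] \<open>0 < t\<close> by simp
  finally have measure_A: "measure lebesgue A = t ^ DIM('a) * measure lebesgue \<Omega>" .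
  have "inner_nbhd \<epsilon> \<Omega> \<subseteq> \<Omega> - A"
    using inner_nbhd_subset inner_nbhd_disjoint_homothetic_interior[OF \<open>convex \<Omega>\<close> assms(3) _ \<open>0 < t\<close> \<open>t \<le> 1\<close>]
      assms(4,5) unfolding \<epsilon> A_def by fastforce
  then have "measure lebesgue (inner_nbhd \<epsilon> \<Omega>) \<le> measure lebesgue (\<Omega> - A)"
    using \<Omega> A by (intro measure_le_fmeasurable_superset) auto
  also have "\<dots> = measure lebesgue \<Omega> - measure lebesgue A"
    using \<Omega> A \<open>A \<subseteq> \<Omega>\<close> by (intro measure_Diff) (auto simp: fmeasurable_def)
  finally show ?thesis using measure_A unfolding t_def by (simp add: algebra_simps)
qed

lemma bdd_above_inscribed_radii:
  fixes \<Omega> :: "'a::euclidean_space set"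
  assumes "bounded \<Omega>"
  shows "bdd_above {r. \<exists>x. cball x r \<subseteq> \<Omega>}"
proof (rule bdd_aboveI)
  fix r assume "r \<in> {r. \<exists>x. cball x r \<subseteq> \<Omega>}"
  then obtain x where "cball x r \<subseteq> \<Omega>" by auto
  then have "diameter (cball x r) \<le> diameter \<Omega>" using assms by (rule diameter_subset)
  then show "r \<le> diameter \<Omega>" using diameter_ge_0[OF assms] by (auto split: if_splits)
qed

lemma cball_subset_if_less_inradius:
  fixes \<Omega> :: "'a::euclidean_space set"
  assumes "bounded \<Omega>" and "\<rho> < inradius \<Omega>"
  obtains x where "cball x \<rho> \<subseteq> \<Omega>"
proof -
  \<comment> \<open>The set of radii is nonempty because \<open>cball x (-1) = {}\<close>.\<close>
  have "-1 \<in> {r. \<exists>x. cball x r \<subseteq> \<Omega>}" by simp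
  then obtain s x where "\<rho> < s" "cball x s \<subseteq> \<Omega>"
    using assms less_cSup_iff[OF _ bdd_above_inscribed_radii] unfolding inradius_def by blast
  then show ?thesis using that subset_cball[of \<rho> s x] by auto
qed

lemma inradius_pos:
  fixes \<Omega> :: "'a::euclidean_space set"
  assumes "bounded \<Omega>" and "interior \<Omega> \<noteq> {}"
  shows "0 < inradius \<Omega>"
proof -
  obtain x e where "0 < e" "cball x e \<subseteq> \<Omega>"
    using assms(2) by (metis all_not_in_conv mem_interior_cball)
  then have "e \<le> inradius \<Omega>"
    unfolding inradius_def using bdd_above_inscribed_radii[OF assms(1)] by (auto intro: cSup_upper)
  with \<open>0 < e\<close> show ?thesis by simp
qed

theorem mainTheorem3:
  fixes \<Omega> :: "'a::euclidean_space set" and \<epsilon> :: real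
  assumes "convex_body \<Omega>"
    and "0 \<le> \<epsilon>" and "\<epsilon> \<le> inradius \<Omega>"
  shows "measure lebesgue (inner_nbhd \<epsilon> \<Omega>)
           \<le> measure lebesgue \<Omega> * (1 - (1 - \<epsilon> / inradius \<Omega>) ^ DIM('a))"
proof -
  have "convex \<Omega>" "bounded \<Omega>" "interior \<Omega> \<noteq> {}"
    using assms(1) unfolding convex_body_def by auto
  then have \<Omega>: "\<Omega> \<in> lmeasurable" and r: "0 < inradius \<Omega>"
    by (auto intro: measurable_convex inradius_pos)
  show ?thesis
  proof (cases "\<epsilon> = inradius \<Omega>")
    case True
    then show ?thesis using r measure_le_fmeasurable_superset[OF inner_nbhd_subset \<Omega>]
      by (simp add: power_0_left)
  next
    case False
    with assms(3) have "\<epsilon> < inradius \<Omega>" by simp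
    let ?bound = "\<lambda>\<rho>. measure lebesgue \<Omega> * (1 - (1 - \<epsilon> / \<rho>) ^ DIM('a))"
    have "(?bound \<longlongrightarrow> ?bound (inradius \<Omega>)) (at_left (inradius \<Omega>))"
      using r by (intro tendsto_intros) auto
    moreover have "\<forall>\<^sub>F \<rho> in at_left (inradius \<Omega>). measure lebesgue (inner_nbhd \<epsilon> \<Omega>) \<le> ?bound \<rho>"
      using eventually_at_left_real[OF \<open>\<epsilon> < inradius \<Omega>\<close>]
    proof eventually_elim
      case (elim \<rho>)
      then obtain x where "cball x \<rho> \<subseteq> \<Omega>"
        using cball_subset_if_less_inradius[OF \<open>bounded \<Omega>\<close>] by auto
      then show ?case
        using \<open>convex \<Omega>\<close> \<open>bounded \<Omega>\<close> assms(2) elim by (intro measure_inner_nbhd_le_of_cball_subset) auto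
    qed
    ultimately show ?thesis by (rule tendsto_le[OF trivial_limit_at_left_real _ tendsto_const])
  qed
qed

end
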